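(* Let $R$ be a commutative Artinian ring, $M$ a non-zero $R$-module, and $M=\sum_{i=1}^n K_i$ a minimal PS-hollow representation of $M$, where $K_i$ is $H_i$-PS-hollow for each $i$. Suppose that every nonzero submodule of $In(K_i)$ is $H_i$-PS-hollow for all $i\in\{1,\dots,n\}$. Then $M=\bigoplus_{i=1}^n K_i$.
   Context: An $R$-submodule $N\leq M$ is PS-hollow iff for every ideal $I\leq R$ and every submodule $L\leq M$: $N\subseteq IM+L$ implies $N\subseteq IM$ or $N\subseteq L$. For PS-hollow $N$: $A_N=\{I\leq R: N\subseteq IM\}$, $H_N$ the set of minimal elements of $A_N$, $In(N)=\bigcap_{I\in H_N}IM$ ($=M$ if $H_N=\emptyset$); $N$ is $H$-PS-hollow iff PS-hollow with $H_N=H$. A minimal PS-hollow representation is $M=\sum_{i=1}^n K_i$ with each $K_i$ $H_i$-PS-hollow, $In(K_1),\dots,In(K_n)$ pairwise incomparable, and $K_j\not\subseteq\sum_{i\neq j}K_i$ for all $j$. *)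

theory Defs
  imports "HOL-Algebra.Algebra"
begin

definition artinian_cring :: "('a, 'c) ring_scheme \<Rightarrow> bool" where
  "artinian_cring R \<longleftrightarrow> cring R \<and>
     (\<forall>f :: nat \<Rightarrow> 'a set. (\<forall>k. ideal (f k) R) \<and> (\<forall>k. f (Suc k) \<subseteq> f k)
        \<longrightarrow> (\<exists>N. \<forall>k\<ge>N. f k = f N))"

definition gen_submodule :: "('a, 'c) ring_scheme \<Rightarrow> ('a, 'b, 'd) module_scheme \<Rightarrow> 'b set \<Rightarrow> 'b set" where
  "gen_submodule R M S = \<Inter>{N. submodule N R M \<and> S \<subseteq> N}"

definition ideal_mod :: "('a, 'c) ring_scheme \<Rightarrow> ('a, 'b, 'd) module_scheme \<Rightarrow> 'a set \<Rightarrow> 'b set" where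
  "ideal_mod R M I = gen_submodule R M {a \<odot>\<^bsub>M\<^esub> m | a m. a \<in> I \<and> m \<in> carrier M}"

definition sum_submods :: "('a, 'c) ring_scheme \<Rightarrow> ('a, 'b, 'd) module_scheme \<Rightarrow> (nat \<Rightarrow> 'b set) \<Rightarrow> nat set \<Rightarrow> 'b set" where
  "sum_submods R M K J = gen_submodule R M (\<Union>i\<in>J. K i)"

definition PS_hollow :: "('a, 'c) ring_scheme \<Rightarrow> ('a, 'b, 'd) module_scheme \<Rightarrow> 'b set \<Rightarrow> bool" where
  "PS_hollow R M N \<longleftrightarrow> submodule N R M \<and>
     (\<forall>I L. ideal I R \<longrightarrow> submodule L R M \<longrightarrow>
        N \<subseteq> ideal_mod R M I <+>\<^bsub>M\<^esub> L \<longrightarrow> N \<subseteq> ideal_mod R M I \<or> N \<subseteq> L)"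

definition A_set :: "('a, 'c) ring_scheme \<Rightarrow> ('a, 'b, 'd) module_scheme \<Rightarrow> 'b set \<Rightarrow> 'a set set" where
  "A_set R M N = {I. ideal I R \<and> N \<subseteq> ideal_mod R M I}"

definition H_set :: "('a, 'c) ring_scheme \<Rightarrow> ('a, 'b, 'd) module_scheme \<Rightarrow> 'b set \<Rightarrow> 'a set set" where
  "H_set R M N = {I \<in> A_set R M N. \<forall>J \<in> A_set R M N. J \<subseteq> I \<longrightarrow> J = I}"

definition In_sub :: "('a, 'c) ring_scheme \<Rightarrow> ('a, 'b, 'd) module_scheme \<Rightarrow> 'b set \<Rightarrow> 'b set" where
  "In_sub R M N = (if H_set R M N = {} then carrier M else (\<Inter>I \<in> H_set R M N. ideal_mod R M I))"

definition H_PS_hollow :: "('a, 'c) ring_scheme \<Rightarrow> ('a, 'b, 'd) module_scheme \<Rightarrow> 'a set set \<Rightarrow> 'b set \<Rightarrow> bool" where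
  "H_PS_hollow R M H N \<longleftrightarrow> PS_hollow R M N \<and> H_set R M N = H"

definition min_PS_hollow_rep :: "('a, 'c) ring_scheme \<Rightarrow> ('a, 'b, 'd) module_scheme \<Rightarrow> nat \<Rightarrow> (nat \<Rightarrow> 'b set) \<Rightarrow> (nat \<Rightarrow> 'a set set) \<Rightarrow> bool" where
  "min_PS_hollow_rep R M n K H \<longleftrightarrow>
     carrier M = sum_submods R M K {..<n} \<and>
     (\<forall>i<n. H_PS_hollow R M (H i) (K i)) \<and>
     (\<forall>i<n. \<forall>j<n. i \<noteq> j \<longrightarrow> \<not> In_sub R M (K i) \<subseteq> In_sub R M (K j)) \<and>
     (\<forall>j<n. \<not> K j \<subseteq> sum_submods R M K ({..<n} - {j}))"

definition is_direct_sum :: "('a, 'c) ring_scheme \<Rightarrow> ('a, 'b, 'd) module_scheme \<Rightarrow> nat \<Rightarrow> (nat \<Rightarrow> 'b set) \<Rightarrow> bool" where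
  "is_direct_sum R M n K \<longleftrightarrow>
     carrier M = sum_submods R M K {..<n} \<and>
     (\<forall>j<n. K j \<inter> sum_submods R M K ({..<n} - {j}) = {\<zero>\<^bsub>M\<^esub>})"

end

theory Submission
  imports Defs
begin

text \<open>
  Let \<open>N = K\<^sub>j \<inter> \<Sum>\<^sub>i\<^sub>\<noteq>\<^sub>j K\<^sub>i\<close> and suppose \<open>N \<noteq> 0\<close>. Since \<open>N \<subseteq> K\<^sub>j \<subseteq> In(K\<^sub>j)\<close>, the hypothesis makes
  \<open>N\<close> an \<open>H\<^sub>j\<close>-PS-hollow submodule. A PS-hollow submodule of a finite sum of submodules lies in
  \<open>In(K\<^sub>i)\<close> for one of the summands, so \<open>N \<subseteq> In(K\<^sub>i) \<subseteq> IM\<close> for some \<open>i \<noteq> j\<close> and all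
  \<open>I \<in> H\<^sub>i\<close>. By the descending chain condition each such \<open>I\<close> contains a minimal element of
  \<open>A\<^sub>N\<close>, i.e. an element of \<open>H\<^sub>N = H\<^sub>j\<close>; hence \<open>In(K\<^sub>j) \<subseteq> In(K\<^sub>i)\<close>, contradicting minimality
  of the representation.
\<close>

context module
begin

lemma submodule_zero_closed: "submodule N R M \<Longrightarrow> \<zero>\<^bsub>M\<^esub> \<in> N"
  using additive_subgroup.zero_closed[OF additive_subgroup.intro[OF submodule.axioms(1)]] .

lemma submodule_Int:
  assumes "submodule A R M" "submodule B R M"
  shows "submodule (A \<inter> B) R M"
  by (rule submoduleI)
    (use submoduleE[OF assms(1)] submoduleE[OF assms(2)] submodule_zero_closed[OF assms(1)]
        submodule_zero_closed[OF assms(2)] in auto)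

lemma submodule_set_add:
  assumes A: "submodule A R M" and B: "submodule B R M"
  shows "submodule (A <+>\<^bsub>M\<^esub> B) R M"
proof -
  have "additive_subgroup (A <+>\<^bsub>M\<^esub> B) M"
    using A B by (intro add_additive_subgroups additive_subgroup.intro submodule.axioms(1))
  then have sub: "subgroup (A <+>\<^bsub>M\<^esub> B) (add_monoid M)"
    by (rule additive_subgroup.a_subgroup)
  have "r \<odot>\<^bsub>M\<^esub> x \<in> A <+>\<^bsub>M\<^esub> B" if r: "r \<in> carrier R" and x: "x \<in> A <+>\<^bsub>M\<^esub> B" for r x
  proof -
    obtain a b where ab: "a \<in> A" "b \<in> B" "x = a \<oplus>\<^bsub>M\<^esub> b"
      using x unfolding set_add_def' by blast
    have "a \<in> carrier M" "b \<in> carrier M"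
      using ab(1,2) submoduleE(1) A B by auto
    then have "r \<odot>\<^bsub>M\<^esub> x = r \<odot>\<^bsub>M\<^esub> a \<oplus>\<^bsub>M\<^esub> r \<odot>\<^bsub>M\<^esub> b"
      using r ab(3) by (simp add: smult_r_distr)
    moreover have "r \<odot>\<^bsub>M\<^esub> a \<in> A" "r \<odot>\<^bsub>M\<^esub> b \<in> B"
      using ab r submoduleE(4) A B by auto
    ultimately show ?thesis
      unfolding set_add_def' by blast
  qed
  with sub show ?thesis
    by (intro submodule.intro submodule_axioms.intro)
qed

lemma set_add_subset_left:
  assumes "submodule A R M" "submodule B R M"
  shows "A \<subseteq> A <+>\<^bsub>M\<^esub> B"
proof
  fix a assume "a \<in> A"
  moreover have "a = a \<oplus>\<^bsub>M\<^esub> \<zero>\<^bsub>M\<^esub>"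
    using \<open>a \<in> A\<close> submoduleE(1)[OF assms(1)] by (simp add: subsetD)
  ultimately show "a \<in> A <+>\<^bsub>M\<^esub> B"
    using submodule_zero_closed[OF assms(2)] unfolding set_add_def' by blast
qed

lemma set_add_subset_right:
  assumes "submodule A R M" "submodule B R M"
  shows "B \<subseteq> A <+>\<^bsub>M\<^esub> B"
proof
  fix b assume "b \<in> B"
  moreover have "b = \<zero>\<^bsub>M\<^esub> \<oplus>\<^bsub>M\<^esub> b"
    using \<open>b \<in> B\<close> submoduleE(1)[OF assms(2)] by (simp add: subsetD)
  ultimately show "b \<in> A <+>\<^bsub>M\<^esub> B"
    using submodule_zero_closed[OF assms(1)] unfolding set_add_def' by blast
qed

lemma set_add_mono_left: "A \<subseteq> A' \<Longrightarrow> A <+>\<^bsub>M\<^esub> B \<subseteq> A' <+>\<^bsub>M\<^esub> B"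
  unfolding set_add_def' by blast

lemma gen_submodule_least: "submodule N R M \<Longrightarrow> S \<subseteq> N \<Longrightarrow> gen_submodule R M S \<subseteq> N"
  unfolding gen_submodule_def by blast

lemma gen_submodule_mono: "S \<subseteq> S' \<Longrightarrow> gen_submodule R M S \<subseteq> gen_submodule R M S'"
  unfolding gen_submodule_def by blast

lemma submodule_gen_submodule:
  assumes "S \<subseteq> carrier M"
  shows "submodule (gen_submodule R M S) R M"
proof (rule submoduleI)
  have "carrier M \<in> {N. submodule N R M \<and> S \<subseteq> N}"
    using carrier_is_submodule assms by auto
  then show "gen_submodule R M S \<subseteq> carrier M"
    unfolding gen_submodule_def by blast
qed (use submoduleE submodule_zero_closed in \<open>auto simp: gen_submodule_def\<close>)

lemma submodule_ideal_mod: "ideal I R \<Longrightarrow> submodule (ideal_mod R M I) R M"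
  unfolding ideal_mod_def
  by (intro submodule_gen_submodule) (auto dest: ideal.Icarr)

lemma ideal_mod_mono: "I \<subseteq> J \<Longrightarrow> ideal_mod R M I \<subseteq> ideal_mod R M J"
  unfolding ideal_mod_def by (rule gen_submodule_mono) blast

lemma submodule_sum_submods:
  "(\<And>i. i \<in> J \<Longrightarrow> submodule (K i) R M) \<Longrightarrow> submodule (sum_submods R M K J) R M"
  unfolding sum_submods_def using submoduleE(1) by (intro submodule_gen_submodule) blast

lemma sum_submods_least:
  "submodule N R M \<Longrightarrow> (\<And>i. i \<in> J \<Longrightarrow> K i \<subseteq> N) \<Longrightarrow> sum_submods R M K J \<subseteq> N"
  unfolding sum_submods_def by (rule gen_submodule_least) auto

lemma subset_sum_submods: "i \<in> J \<Longrightarrow> K i \<subseteq> sum_submods R M K J"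
  unfolding sum_submods_def gen_submodule_def by blast

lemma sum_submods_empty: "sum_submods R M K {} \<subseteq> {\<zero>\<^bsub>M\<^esub>}"
  by (rule sum_submods_least) (auto intro: submoduleI)

lemma sum_submods_insert_subset:
  assumes "submodule (K i) R M" "\<And>k. k \<in> J \<Longrightarrow> submodule (K k) R M"
  shows "sum_submods R M K (insert i J) \<subseteq> K i <+>\<^bsub>M\<^esub> sum_submods R M K J"
proof -
  have S: "submodule (sum_submods R M K J) R M"
    using assms(2) by (rule submodule_sum_submods)
  show ?thesis
    using set_add_subset_left[OF assms(1) S] set_add_subset_right[OF assms(1) S]
      subset_sum_submods[of _ J K]
    by (intro sum_submods_least submodule_set_add[OF assms(1) S]) blast
qed

lemma H_setD:
  "I \<in> H_set R M N \<Longrightarrow> ideal I R \<and> N \<subseteq> ideal_mod R M I"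
  unfolding H_set_def A_set_def by blast

lemma In_sub_subset_ideal_mod: "I \<in> H_set R M N \<Longrightarrow> In_sub R M N \<subseteq> ideal_mod R M I"
  unfolding In_sub_def by auto

lemma In_sub_subset_carrier: "In_sub R M N \<subseteq> carrier M"
proof (cases "H_set R M N = {}")
  case False
  then obtain I where I: "I \<in> H_set R M N"
    by blast
  then have "ideal_mod R M I \<subseteq> carrier M"
    using submoduleE(1)[OF submodule_ideal_mod] H_setD by blast
  with False I show ?thesis
    unfolding In_sub_def by auto
qed (simp add: In_sub_def)

lemma subset_In_sub: "N \<subseteq> carrier M \<Longrightarrow> N \<subseteq> In_sub R M N"
  unfolding In_sub_def by (auto dest: H_setD)

lemma In_sub_greatest:
  assumes "N \<subseteq> carrier M" "\<And>I. I \<in> H_set R M K \<Longrightarrow> N \<subseteq> ideal_mod R M I"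
  shows "N \<subseteq> In_sub R M K"
  using assms unfolding In_sub_def by auto

lemma PS_hollow_subset_In_sub:
  assumes N: "PS_hollow R M N" and K: "submodule K R M" and L: "submodule L R M"
    and "N \<subseteq> K <+>\<^bsub>M\<^esub> L" "\<not> N \<subseteq> L"
  shows "N \<subseteq> In_sub R M K"
proof (rule In_sub_greatest)
  show "N \<subseteq> carrier M"
    using N submoduleE(1) unfolding PS_hollow_def by blast
  fix I assume "I \<in> H_set R M K"
  then have I: "ideal I R" and "K \<subseteq> ideal_mod R M I"
    by (auto dest: H_setD)
  then have "N \<subseteq> ideal_mod R M I <+>\<^bsub>M\<^esub> L"
    using \<open>N \<subseteq> K <+>\<^bsub>M\<^esub> L\<close> set_add_mono_left[of K "ideal_mod R M I" L] by blast
  then have "N \<subseteq> ideal_mod R M I \<or> N \<subseteq> L"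
    using N I L unfolding PS_hollow_def by blast
  then show "N \<subseteq> ideal_mod R M I"
    using \<open>\<not> N \<subseteq> L\<close> by blast
qed

lemma PS_hollow_subset_sum_submods:
  assumes "finite J" "PS_hollow R M N" "\<And>i. i \<in> J \<Longrightarrow> submodule (K i) R M"
    and "N \<subseteq> sum_submods R M K J"
  shows "N \<subseteq> {\<zero>\<^bsub>M\<^esub>} \<or> (\<exists>i\<in>J. N \<subseteq> In_sub R M (K i))"
  using assms(1,3,4)
proof (induction J rule: finite_induct)
  case empty
  then show ?case using sum_submods_empty by blast
next
  case (insert i J)
  show ?case
  proof (cases "N \<subseteq> sum_submods R M K J")
    case True
    then show ?thesis using insert.IH insert.prems(1) by blast
  next
    case False
    have "N \<subseteq> K i <+>\<^bsub>M\<^esub> sum_submods R M K J"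
      using insert.prems sum_submods_insert_subset by blast
    moreover have "submodule (sum_submods R M K J) R M"
      using insert.prems(1) by (simp add: submodule_sum_submods)
    ultimately have "N \<subseteq> In_sub R M (K i)"
      using PS_hollow_subset_In_sub[OF assms(2)] insert.prems(1) False by simp
    then show ?thesis by blast
  qed
qed

end

lemma wf_ideal_psubset:
  assumes "artinian_cring R"
  shows "wf {(J, I). ideal J R \<and> ideal I R \<and> J \<subset> I}"
proof (unfold wf_iff_no_infinite_down_chain, rule notI)
  have dcc: "\<forall>f. (\<forall>k. ideal (f k) R) \<and> (\<forall>k. f (Suc k) \<subseteq> f k) \<longrightarrow> (\<exists>N. \<forall>k\<ge>N. f k = f N)"
    using assms unfolding artinian_cring_def by (rule conjunct2)
  assume "\<exists>f. \<forall>k. (f (Suc k), f k) \<in> {(J, I). ideal J R \<and> ideal I R \<and> J \<subset> I}"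
  then obtain f where chain: "\<forall>k. ideal (f (Suc k)) R \<and> ideal (f k) R \<and> f (Suc k) \<subset> f k"
    by auto
  then have "(\<forall>k. ideal (f k) R) \<and> (\<forall>k. f (Suc k) \<subseteq> f k)"
    by blast
  then have "\<exists>N. \<forall>k\<ge>N. f k = f N"
    by (rule dcc[rule_format])
  then obtain N where "\<forall>k\<ge>N. f k = f N" ..
  then have "f (Suc N) = f N"
    using le_Suc_eq by blast
  with chain show False
    by blast
qed

lemma exists_H_set_subset:
  assumes "artinian_cring R" "I \<in> A_set R M N"
  shows "\<exists>J\<in>H_set R M N. J \<subseteq> I"
proof -
  let ?below = "{J \<in> A_set R M N. J \<subseteq> I}"
  have "I \<in> ?below"
    using assms(2) by blast
  then obtain J where J: "J \<in> ?below"
    and min: "\<And>J'. (J', J) \<in> {(J, I). ideal J R \<and> ideal I R \<and> J \<subset> I} \<Longrightarrow> J' \<notin> ?below"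
    by (rule wfE_min[OF wf_ideal_psubset[OF assms(1)]]) blast
  have "J' = J" if J': "J' \<in> A_set R M N" "J' \<subseteq> J" for J'
  proof (rule ccontr)
    assume "J' \<noteq> J"
    with J J' have "(J', J) \<in> {(J, I). ideal J R \<and> ideal I R \<and> J \<subset> I}"
      unfolding A_set_def by auto
    with min J J' show False
      by blast
  qed
  with J show ?thesis
    unfolding H_set_def by blast
qed

lemma (in module) In_sub_subset_if_H_set_eq:
  assumes "artinian_cring R" "H_set R M N = H_set R M K" "N \<subseteq> In_sub R M L"
  shows "In_sub R M K \<subseteq> In_sub R M L"
proof (rule In_sub_greatest[OF In_sub_subset_carrier])
  fix I assume I: "I \<in> H_set R M L"
  then have "N \<subseteq> ideal_mod R M I"
    using assms(3) In_sub_subset_ideal_mod[OF I] by blast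
  then have "I \<in> A_set R M N"
    using H_setD[OF I] unfolding A_set_def by blast
  then obtain J where J: "J \<in> H_set R M K" "J \<subseteq> I"
    using exists_H_set_subset[OF assms(1)] assms(2) by blast
  have "In_sub R M K \<subseteq> ideal_mod R M J"
    using J(1) by (rule In_sub_subset_ideal_mod)
  also have "\<dots> \<subseteq> ideal_mod R M I"
    using J(2) by (rule ideal_mod_mono)
  finally show "In_sub R M K \<subseteq> ideal_mod R M I" .
qed

lemma (in module) PS_hollow_In_sub_subset_summand:
  assumes "artinian_cring R" "finite J" "\<And>i. i \<in> J \<Longrightarrow> submodule (K i) R M"
    and "PS_hollow R M N" "N \<noteq> {\<zero>\<^bsub>M\<^esub>}" "H_set R M N = H_set R M L"
    and "N \<subseteq> sum_submods R M K J"
  obtains i where "i \<in> J" "In_sub R M L \<subseteq> In_sub R M (K i)"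
proof -
  have "\<zero>\<^bsub>M\<^esub> \<in> N"
    using assms(4) submodule_zero_closed unfolding PS_hollow_def by blast
  then obtain i where "i \<in> J" "N \<subseteq> In_sub R M (K i)"
    using PS_hollow_subset_sum_submods[OF assms(2,4,3,7)] assms(5) by blast
  with In_sub_subset_if_H_set_eq[OF assms(1,6)] that show thesis
    by blast
qed

theorem corollary5p24:
  fixes R :: "('a, 'c) ring_scheme" and M :: "('a, 'b, 'd) module_scheme"
    and n :: nat and K :: "nat \<Rightarrow> 'b set" and H :: "nat \<Rightarrow> 'a set set"
  assumes "artinian_cring R"
    and "module R M"
    and "carrier M \<noteq> {\<zero>\<^bsub>M\<^esub>}"
    and "min_PS_hollow_rep R M n K H"
    and "\<forall>i<n. \<forall>N. submodule N R M \<and> N \<subseteq> In_sub R M (K i) \<and> N \<noteq> {\<zero>\<^bsub>M\<^esub>}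
            \<longrightarrow> H_PS_hollow R M (H i) N"
  shows "is_direct_sum R M n K"
proof -
  interpret module R M by (rule assms(2))
  have carrier: "carrier M = sum_submods R M K {..<n}"
    and hollow_K: "\<And>i. i < n \<Longrightarrow> H_PS_hollow R M (H i) (K i)"
    and incomparable: "\<And>i j. i < n \<Longrightarrow> j < n \<Longrightarrow> i \<noteq> j \<Longrightarrow> \<not> In_sub R M (K i) \<subseteq> In_sub R M (K j)"
    using assms(4) unfolding min_PS_hollow_rep_def by blast+
  have sub_K: "\<And>i. i < n \<Longrightarrow> submodule (K i) R M"
    using hollow_K unfolding H_PS_hollow_def PS_hollow_def by blast
  have "N = {\<zero>\<^bsub>M\<^esub>}" if j: "j < n" and N: "N = K j \<inter> sum_submods R M K ({..<n} - {j})" for j N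
  proof (rule ccontr)
    assume nonzero: "N \<noteq> {\<zero>\<^bsub>M\<^esub>}"
    have "submodule N R M"
      unfolding N using j by (intro submodule_Int sub_K submodule_sum_submods) auto
    moreover have "N \<subseteq> In_sub R M (K j)"
      unfolding N using subset_In_sub submoduleE(1)[OF sub_K[OF j]] by blast
    ultimately have "H_PS_hollow R M (H j) N"
      using assms(5) j nonzero by blast
    then obtain i where "i \<in> {..<n} - {j}" "In_sub R M (K j) \<subseteq> In_sub R M (K i)"
      using PS_hollow_In_sub_subset_summand[OF assms(1), of "{..<n} - {j}" K N "K j"]
        sub_K nonzero hollow_K[OF j] N
      unfolding H_PS_hollow_def by auto
    with incomparable j show False
      by blast
  qed
  with carrier show ?thesis
    unfolding is_direct_sum_def by blast
qed

end
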